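(* For each type $X$ in the list below, the determinant of the (finite) Cartan matrix $C_{\mathrm{fin}}$ of type $X$ equals $$\det C_{\mathrm{fin}}=\frac{8\,pqr}{ab},$$ where $(a,b,p,q,r)$ is given by: $\mathsf A_l$ ($l\ge0$): $(2,\,l+1,\,\tfrac12(l+1),\,\tfrac12(l+1),\,1)$; $\mathsf D_l$ ($l\ge4$): $(4,\,2l-4,\,l-2,\,2,\,2)$; $\mathsf E_6$: $(6,8,3,3,2)$; $\mathsf E_7$: $(8,12,4,3,2)$; $\mathsf E_8$: $(12,20,5,3,2)$; $\mathsf C_l$ ($l\ge2$): $(2,\,2l,\,l,\,1,\,1)$; $\mathsf B_l$ ($l\ge3$): $(4,\,2l-2,\,l-1,\,2,\,1)$; $\mathsf F_4$: $(6,8,3,2,1)$; $\mathsf G_2$: $(4,4,2,1,1)$.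
   Context: $C_{\mathrm{fin}}$ is the $l\times l$ Cartan matrix of the finite root system of type $X$ of rank $l$ (for $\mathsf A_0$ it is the empty matrix, with determinant $1$). *)

theory Defs
  imports "Jordan_Normal_Form.Determinant"
begin

text \<open>Cartan matrices of the finite root systems, as l x l integer matrices
(Jordan_Normal_Form type int mat), nodes indexed 0,...,l-1 following Bourbaki's
numbering shifted by one. Diagonal entries 2; off-diagonal entries -1 for simple
edges; multiple bonds as in Kac's convention.\<close>

definition adj_cartan :: "nat \<Rightarrow> (nat \<Rightarrow> nat \<Rightarrow> bool) \<Rightarrow> int mat" where
  "adj_cartan n E = mat n n (\<lambda>(i,j). if i = j then 2 else if E i j \<or> E j i then -1 else 0)"

definition cartan_A :: "nat \<Rightarrow> int mat" where
  "cartan_A l = adj_cartan l (\<lambda>i j. j = i + 1)"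

definition cartan_D :: "nat \<Rightarrow> int mat" where
  "cartan_D l = adj_cartan l (\<lambda>i j. (j = i + 1 \<and> j \<le> l - 2) \<or> (i = l - 3 \<and> j = l - 1))"

definition cartan_E :: "nat \<Rightarrow> int mat" where
  "cartan_E n = adj_cartan n (\<lambda>i j. (i = 0 \<and> j = 2) \<or> (i = 1 \<and> j = 3) \<or> (2 \<le> i \<and> j = i + 1))"

definition cartan_B :: "nat \<Rightarrow> int mat" where
  "cartan_B l = mat l l (\<lambda>(i,j). if i = j then 2
      else if i = l - 2 \<and> j = l - 1 then -2
      else if j = i + 1 \<or> i = j + 1 then -1 else 0)"

definition cartan_C :: "nat \<Rightarrow> int mat" where
  "cartan_C l = mat l l (\<lambda>(i,j). if i = j then 2
      else if i = l - 1 \<and> j = l - 2 then -2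
      else if j = i + 1 \<or> i = j + 1 then -1 else 0)"

definition cartan_F4 :: "int mat" where
  "cartan_F4 = mat_of_rows_list 4 [[2,-1,0,0],[-1,2,-2,0],[0,-1,2,-1],[0,0,-1,2]]"

definition cartan_G2 :: "int mat" where
  "cartan_G2 = mat_of_rows_list 2 [[2,-1],[-3,2]]"

definition det_formula :: "real \<Rightarrow> real \<Rightarrow> real \<Rightarrow> real \<Rightarrow> real \<Rightarrow> real" where
  "det_formula a b p q r = 8 * p * q * r / (a * b)"

end

theory Submission
  imports Defs
begin

text \<open>If node 0 of a Cartan matrix C is a leaf of its Dynkin diagram, joined only to node 1,
expanding det C along row 0 and then along column 0 gives
det C = C(0,0) det C' - C(0,1) C(1,0) det C'', where C' and C'' omit the first one and the
first two nodes. In each of the families A, B, C, D and E, removing the leaf at the end of the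
long arm gives the same family of rank one less, so the determinants satisfy
d(l+2) = 2 d(l+1) - d(l) and are linear in the rank; two small ranks fix the line.\<close>

lemma det_mat_Suc:
  fixes f :: "nat \<times> nat \<Rightarrow> 'a :: comm_ring_1"
  shows "det (mat (Suc n) (Suc n) f) = (\<Sum>j<Suc n. (-1) ^ j * f (0, j) *
           det (mat n n (\<lambda>(i, k). f (Suc i, if k < j then k else Suc k))))"
proof -
  have minor: "mat_delete (mat (Suc n) (Suc n) f) 0 j
      = mat n n (\<lambda>(i, k). f (Suc i, if k < j then k else Suc k))" for j
    by (rule eq_matI) (auto simp: mat_delete_def)
  have "det (mat (Suc n) (Suc n) f)
      = (\<Sum>j<Suc n. mat (Suc n) (Suc n) f $$ (0, j) * cofactor (mat (Suc n) (Suc n) f) 0 j)"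
    by (rule laplace_expansion_row) auto
  then show ?thesis
    by (simp add: cofactor_def minor mult_ac)
qed

lemma det_leaf_first:
  fixes A :: "'a :: comm_ring_1 mat"
  assumes A: "A \<in> carrier_mat (Suc (Suc n)) (Suc (Suc n))"
    and row: "\<And>j. 2 \<le> j \<Longrightarrow> j < Suc (Suc n) \<Longrightarrow> A $$ (0, j) = 0"
    and col: "\<And>i. 2 \<le> i \<Longrightarrow> i < Suc (Suc n) \<Longrightarrow> A $$ (i, 0) = 0"
  shows "det A = A $$ (0, 0) * det (mat_delete A 0 0)
                 - A $$ (0, 1) * A $$ (1, 0) * det (mat_delete (mat_delete A 0 0) 0 0)"
proof -
  define B where "B = mat_delete A 0 1"
  have B: "B \<in> carrier_mat (Suc n) (Suc n)"
    using A by (simp add: B_def mat_delete_def)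
  have "det A = (\<Sum>j<Suc (Suc n). A $$ (0, j) * cofactor A 0 j)"
    by (rule laplace_expansion_row[OF A]) simp
  also have "\<dots> = A $$ (0, 0) * det (mat_delete A 0 0) - A $$ (0, 1) * det B"
    using row unfolding sum.lessThan_Suc_shift by (simp add: cofactor_def B_def)
  also have "det B = (\<Sum>i<Suc n. B $$ (i, 0) * cofactor B i 0)"
    by (rule laplace_expansion_column[OF B]) simp
  also have "\<dots> = A $$ (1, 0) * det (mat_delete B 0 0)"
    using col A unfolding sum.lessThan_Suc_shift by (simp add: cofactor_def B_def mat_delete_def)
  also have "mat_delete B 0 0 = mat_delete (mat_delete A 0 0) 0 0"
    using A by (intro eq_matI) (auto simp: B_def mat_delete_def)
  finally show ?thesis by (simp add: algebra_simps)
qed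

lemma det_leaf_last:
  fixes A :: "'a :: comm_ring_1 mat"
  assumes A: "A \<in> carrier_mat (Suc (Suc n)) (Suc (Suc n))"
    and row: "\<And>j. j < n \<Longrightarrow> A $$ (Suc n, j) = 0"
    and col: "\<And>i. i < n \<Longrightarrow> A $$ (i, Suc n) = 0"
  shows "det A = A $$ (Suc n, Suc n) * det (mat_delete A (Suc n) (Suc n))
                 - A $$ (n, Suc n) * A $$ (Suc n, n) * det (mat_delete (mat_delete A (Suc n) (Suc n)) n n)"
proof -
  define B where "B = mat_delete A (Suc n) n"
  have B: "B \<in> carrier_mat (Suc n) (Suc n)"
    using A by (simp add: B_def mat_delete_def)
  have "det A = (\<Sum>j<Suc (Suc n). A $$ (Suc n, j) * cofactor A (Suc n) j)"
    by (rule laplace_expansion_row[OF A]) simp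
  also have "\<dots> = A $$ (Suc n, Suc n) * det (mat_delete A (Suc n) (Suc n)) - A $$ (Suc n, n) * det B"
    using row by (simp add: cofactor_def B_def)
  also have "det B = (\<Sum>i<Suc n. B $$ (i, n) * cofactor B i n)"
    by (rule laplace_expansion_column[OF B]) simp
  also have "\<dots> = A $$ (n, Suc n) * det (mat_delete B n n)"
    using col A by (simp add: cofactor_def B_def mat_delete_def)
  also have "mat_delete B n n = mat_delete (mat_delete A (Suc n) (Suc n)) n n"
    using A by (intro eq_matI) (auto simp: B_def mat_delete_def)
  finally show ?thesis by (simp add: algebra_simps)
qed

lemma linear_if_second_difference_zero:
  fixes d :: "nat \<Rightarrow> 'a :: comm_ring_1"
  assumes rec: "\<And>k. m \<le> k \<Longrightarrow> d (k + 2) = 2 * d (k + 1) - d k"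
    and "m \<le> l"
  shows "d l = d m + of_nat (l - m) * (d (m + 1) - d m)"
proof -
  have "d (m + k) = d m + of_nat k * (d (m + 1) - d m)
      \<and> d (m + k + 1) = d m + of_nat (k + 1) * (d (m + 1) - d m)" for k
  proof (induction k)
    case (Suc k)
    then have IH: "d (m + k) = d m + of_nat k * (d (m + 1) - d m)"
        "d (m + k + 1) = d m + of_nat (k + 1) * (d (m + 1) - d m)" by blast+
    have "d (m + k + 2) = 2 * d (m + k + 1) - d (m + k)"
      using rec[of "m + k"] by (simp add: add.assoc)
    also have "\<dots> = d m + of_nat (k + 2) * (d (m + 1) - d m)"
      unfolding IH by (simp add: algebra_simps)
    finally show ?case
      using IH(2) by (simp add: add.assoc)
  qed simp
  then show ?thesis
    using \<open>m \<le> l\<close> by (metis le_add_diff_inverse)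
qed

lemma mat_delete_cartan_A: "mat_delete (cartan_A (Suc l)) 0 0 = cartan_A l"
  by (intro eq_matI) (auto simp: cartan_A_def adj_cartan_def mat_delete_def)

lemma det_cartan_A_rec: "det (cartan_A (k + 2)) = 2 * det (cartan_A (k + 1)) - det (cartan_A k)"
  using det_leaf_first[of "cartan_A (k + 2)" k]
  by (simp add: mat_delete_cartan_A) (simp add: cartan_A_def adj_cartan_def)

lemma det_cartan_A: "det (cartan_A l) = int l + 1"
proof -
  have "det (cartan_A 0) = 1" "det (cartan_A 1) = 2"
    by (simp_all add: cartan_A_def adj_cartan_def det_mat_Suc)
  then show ?thesis
    using linear_if_second_difference_zero[of 0 "\<lambda>l. det (cartan_A l)" l, OF det_cartan_A_rec]
    by simp
qed

lemma mat_delete_cartan_B: "mat_delete (cartan_B (Suc l)) 0 0 = cartan_B l"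
  by (intro eq_matI) (auto simp: cartan_B_def mat_delete_def)

lemma det_cartan_B_rec:
  "1 \<le> k \<Longrightarrow> det (cartan_B (k + 2)) = 2 * det (cartan_B (k + 1)) - det (cartan_B k)"
  using det_leaf_first[of "cartan_B (k + 2)" k]
  by (simp add: mat_delete_cartan_B) (simp add: cartan_B_def)

lemma det_cartan_B:
  assumes "1 \<le> l"
  shows "det (cartan_B l) = 2"
proof -
  have "det (cartan_B 1) = 2" "det (cartan_B 2) = 2"
    by (simp_all add: cartan_B_def det_mat_Suc numeral_eq_Suc)
  then show ?thesis
    using linear_if_second_difference_zero[of 1 "\<lambda>l. det (cartan_B l)" l, OF det_cartan_B_rec assms]
    by (simp add: numeral_2_eq_2)
qed

lemma mat_delete_cartan_C: "mat_delete (cartan_C (Suc l)) 0 0 = cartan_C l"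
  by (intro eq_matI) (auto simp: cartan_C_def mat_delete_def)

lemma det_cartan_C_rec:
  "1 \<le> k \<Longrightarrow> det (cartan_C (k + 2)) = 2 * det (cartan_C (k + 1)) - det (cartan_C k)"
  using det_leaf_first[of "cartan_C (k + 2)" k]
  by (simp add: mat_delete_cartan_C) (simp add: cartan_C_def)

lemma det_cartan_C:
  assumes "1 \<le> l"
  shows "det (cartan_C l) = 2"
proof -
  have "det (cartan_C 1) = 2" "det (cartan_C 2) = 2"
    by (simp_all add: cartan_C_def det_mat_Suc numeral_eq_Suc)
  then show ?thesis
    using linear_if_second_difference_zero[of 1 "\<lambda>l. det (cartan_C l)" l, OF det_cartan_C_rec assms]
    by (simp add: numeral_2_eq_2)
qed

text \<open>For l < 3 the truncated subtraction l - 3 in the definition of cartan_D moves the fork,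
so the deletion identity fails.\<close>

lemma mat_delete_cartan_D:
  assumes "3 \<le> l"
  shows "mat_delete (cartan_D (Suc l)) 0 0 = cartan_D l"
proof -
  obtain k where "l = k + 3"
    using assms by (metis add.commute le_Suc_ex)
  then show ?thesis
    by (intro eq_matI) (auto simp: cartan_D_def adj_cartan_def mat_delete_def)
qed

lemma det_cartan_D_rec:
  "3 \<le> k \<Longrightarrow> det (cartan_D (k + 2)) = 2 * det (cartan_D (k + 1)) - det (cartan_D k)"
  using det_leaf_first[of "cartan_D (k + 2)" k]
  by (simp add: mat_delete_cartan_D) (simp add: cartan_D_def adj_cartan_def)

lemma det_cartan_D:
  assumes "3 \<le> l"
  shows "det (cartan_D l) = 4"
proof -
  have "det (cartan_D 3) = 4" "det (cartan_D 4) = 4"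
    by (simp_all add: cartan_D_def adj_cartan_def det_mat_Suc numeral_eq_Suc)
  then show ?thesis
    using linear_if_second_difference_zero[of 3 "\<lambda>l. det (cartan_D l)" l, OF det_cartan_D_rec assms]
    by simp
qed

lemma mat_delete_cartan_E: "mat_delete (cartan_E (Suc n)) n n = cartan_E n"
  by (intro eq_matI) (auto simp: cartan_E_def adj_cartan_def mat_delete_def)

lemma det_cartan_E_rec:
  "3 \<le> k \<Longrightarrow> det (cartan_E (k + 2)) = 2 * det (cartan_E (k + 1)) - det (cartan_E k)"
  using det_leaf_last[of "cartan_E (k + 2)" k]
  by (simp add: mat_delete_cartan_E) (simp add: cartan_E_def adj_cartan_def)

lemma det_cartan_E:
  assumes "3 \<le> n"
  shows "det (cartan_E n) = 9 - int n"
proof -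
  have "det (cartan_E 3) = 6" "det (cartan_E 4) = 5"
    by (simp_all add: cartan_E_def adj_cartan_def det_mat_Suc numeral_eq_Suc)
  then show ?thesis
    using linear_if_second_difference_zero[of 3 "\<lambda>l. det (cartan_E l)" n, OF det_cartan_E_rec assms]
      assms by (simp add: of_nat_diff)
qed

lemma det_cartan_F4: "det cartan_F4 = 1"
  by (simp add: cartan_F4_def mat_of_rows_list_def numeral_eq_Suc det_mat_Suc)

lemma det_cartan_G2: "det cartan_G2 = 1"
  by (simp add: cartan_G2_def mat_of_rows_list_def numeral_eq_Suc det_mat_Suc)

theorem mainTheorem5:
  shows "(\<forall>l::nat. real_of_int (det (cartan_A l)) =
            det_formula 2 (real l + 1) ((real l + 1) / 2) ((real l + 1) / 2) 1)
       \<and> (\<forall>l::nat. l \<ge> 4 \<longrightarrow> real_of_int (det (cartan_D l)) =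
            det_formula 4 (2 * real l - 4) (real l - 2) 2 2)
       \<and> real_of_int (det (cartan_E 6)) = det_formula 6 8 3 3 2
       \<and> real_of_int (det (cartan_E 7)) = det_formula 8 12 4 3 2
       \<and> real_of_int (det (cartan_E 8)) = det_formula 12 20 5 3 2
       \<and> (\<forall>l::nat. l \<ge> 2 \<longrightarrow> real_of_int (det (cartan_C l)) =
            det_formula 2 (2 * real l) (real l) 1 1)
       \<and> (\<forall>l::nat. l \<ge> 3 \<longrightarrow> real_of_int (det (cartan_B l)) =
            det_formula 4 (2 * real l - 2) (real l - 1) 2 1)
       \<and> real_of_int (det cartan_F4) = det_formula 6 8 3 2 1
       \<and> real_of_int (det cartan_G2) = det_formula 4 4 2 1 1"
  by (auto simp: det_cartan_A det_cartan_B det_cartan_C det_cartan_D det_cartan_E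
      det_cartan_F4 det_cartan_G2 det_formula_def field_simps)

end
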